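(* Consider the amplicon branching process with stutter with parameters $p,\xi\in[0,1]$, started from a single target amplicon and no stutter amplicons, and let $T$ and $S$ be the numbers of target and stutter amplicons after $n\ge 0$ cycles. Write $q=p(1-\xi)$. Then $$\mathbb{E}[T]=(1+q)^n,\qquad \mathbb{E}[S]=(1+p)^n-(1+q)^n,$$ $$\operatorname{Var}(T)=\frac{1-q}{1+q}\,(1+q)^n\big[(1+q)^n-1\big],$$ $$\mathbb{E}[TS]=(1+q)^{n-1}\Big(\xi\big[1-(1+p)^n\big]+2\big[(1+p)^n-(1+q)^n\big]\Big),$$ and $$\operatorname{Cov}(T,S)=(1+q)^{n-1}\Big[(1-q)\big((1+p)^n-(1+q)^n\big)-\xi\big((1+p)^n-1\big)\Big].$$
   Context: The amplicon branching process with stutter (a model of PCR) is the two-type discrete-time branching process defined as follows. There are two types of particles, target amplicons and stutter amplicons, and all particles persist forever. In each cycle, independently of everything else, each existing target amplicon produces one new target amplicon with probability $p(1-\xi)$, produces one new stutter amplicon with probability $p\xi$, and produces nothing with probability $1-p$; each existing stutter amplicon produces one new stutter amplicon with probability $p$ and nothing with probability $1-p$. Equivalently, the joint probability generating function $F_n(t,s)=\mathbb{E}[t^{T}s^{S}]$ after $n$ cycles satisfies $F_0(t,s)=t$, $G_0(s)=s$, $F_n=(1-p)F_{n-1}+p(1-\xi)F_{n-1}^2+p\xi F_{n-1}G_{n-1}$, $G_n=(1-p)G_{n-1}+pG_{n-1}^2$. *)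

theory Defs
  imports "HOL-Probability.Probability"
begin

text \<open>Offspring of one target amplicon in one cycle, as a pair
  (new targets, new stutters): (1,0) w.p. p(1-xi), (0,1) w.p. p xi, (0,0) w.p. 1-p.\<close>
definition target_offspring :: "real \<Rightarrow> real \<Rightarrow> (nat \<times> nat) pmf" where
  "target_offspring p \<xi> =
     bind_pmf (bernoulli_pmf p) (\<lambda>b.
       if b then map_pmf (\<lambda>c. if c then (0, 1) else (1, 0)) (bernoulli_pmf \<xi>)
       else return_pmf (0, 0))"

definition stutter_offspring :: "real \<Rightarrow> nat pmf" where
  "stutter_offspring p = map_pmf (\<lambda>b. if b then 1 else 0) (bernoulli_pmf p)"

fun iid_sum_pair :: "nat \<Rightarrow> (nat \<times> nat) pmf \<Rightarrow> (nat \<times> nat) pmf" where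
  "iid_sum_pair 0 D = return_pmf (0, 0)"
| "iid_sum_pair (Suc k) D =
     bind_pmf D (\<lambda>(a, b). map_pmf (\<lambda>(c, d). (a + c, b + d)) (iid_sum_pair k D))"

fun iid_sum :: "nat \<Rightarrow> nat pmf \<Rightarrow> nat pmf" where
  "iid_sum 0 D = return_pmf 0"
| "iid_sum (Suc k) D = bind_pmf D (\<lambda>a. map_pmf (\<lambda>c. a + c) (iid_sum k D))"

definition cycle_step :: "real \<Rightarrow> real \<Rightarrow> nat \<times> nat \<Rightarrow> (nat \<times> nat) pmf" where
  "cycle_step p \<xi> ts =
     (case ts of (t, s) \<Rightarrow>
       bind_pmf (iid_sum_pair t (target_offspring p \<xi>)) (\<lambda>(a, b).
         map_pmf (\<lambda>c. (t + a, s + b + c)) (iid_sum s (stutter_offspring p))))"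

fun amplicon :: "real \<Rightarrow> real \<Rightarrow> nat \<Rightarrow> (nat \<times> nat) pmf" where
  "amplicon p \<xi> 0 = return_pmf (1, 0)"
| "amplicon p \<xi> (Suc n) = bind_pmf (amplicon p \<xi> n) (cycle_step p \<xi>)"

end

theory Submission imports Defs begin

(* Conditioning on the current state, each cycle acts linearly on the vector of moments
   (E T, E S, E T^2, E TS): a target produces a target with probability q and a stutter with
   probability p xi, never both, and distinct particles reproduce independently. Solving the
   resulting linear recurrences from (1, 0, 1, 0) gives the closed forms; variance and
   covariance then follow from E X^2 - (E X)^2 and E XY - E X E Y. *)

lemma expectation_bind_pmf_finite:
  fixes f :: "'b \<Rightarrow> real"
  assumes M: "finite (set_pmf M)" and N: "\<And>x. x \<in> set_pmf M \<Longrightarrow> finite (set_pmf (N x))"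
  shows "measure_pmf.expectation (bind_pmf M N) f
       = measure_pmf.expectation M (\<lambda>x. measure_pmf.expectation (N x) f)"
proof -
  define S where "S = set_pmf (bind_pmf M N)"
  have S: "finite S" using M N by (auto simp: S_def)
  have N_sub: "\<And>x. x \<in> set_pmf M \<Longrightarrow> set_pmf (N x) \<subseteq> S" by (auto simp: S_def)
  have "measure_pmf.expectation (bind_pmf M N) f = (\<Sum>b\<in>S. f b * pmf (bind_pmf M N) b)"
    by (rule integral_measure_pmf_real[OF S]) (auto simp: S_def)
  also have "\<dots> = (\<Sum>b\<in>S. f b * (\<Sum>x\<in>set_pmf M. pmf (N x) b * pmf M x))"
    by (simp add: pmf_bind integral_measure_pmf_real[OF M])
  also have "\<dots> = (\<Sum>x\<in>set_pmf M. (\<Sum>b\<in>S. f b * pmf (N x) b) * pmf M x)"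
    by (simp add: sum_distrib_left sum_distrib_right mult_ac sum.swap[of _ S])
  also have "\<dots> = (\<Sum>x\<in>set_pmf M. measure_pmf.expectation (N x) f * pmf M x)"
    using N_sub by (intro sum.cong refl) (subst integral_measure_pmf_real[OF S], auto)
  also have "\<dots> = measure_pmf.expectation M (\<lambda>x. measure_pmf.expectation (N x) f)"
    by (rule integral_measure_pmf_real[OF M, symmetric]) auto
  finally show ?thesis .
qed

lemma covariance_pmf_finite:
  fixes X Y :: "'a \<Rightarrow> real"
  assumes "finite (set_pmf M)"
  shows "measure_pmf.expectation M
           (\<lambda>x. (X x - measure_pmf.expectation M X) * (Y x - measure_pmf.expectation M Y))
       = measure_pmf.expectation M (\<lambda>x. X x * Y x)
         - measure_pmf.expectation M X * measure_pmf.expectation M Y"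
proof -
  have [simp]: "integrable (measure_pmf M) f" for f :: "'a \<Rightarrow> real"
    using assms by (rule integrable_measure_pmf_finite)
  show ?thesis
    by (simp add: algebra_simps)
qed

lemma finite_set_pmf_target_offspring [simp]: "finite (set_pmf (target_offspring p \<xi>))"
  unfolding target_offspring_def by auto

lemma finite_set_pmf_stutter_offspring [simp]: "finite (set_pmf (stutter_offspring p))"
  unfolding stutter_offspring_def by auto

lemma finite_set_pmf_iid_sum_pair:
  "finite (set_pmf D) \<Longrightarrow> finite (set_pmf (iid_sum_pair k D))"
  by (induction k) (auto simp: split_def)

lemma finite_set_pmf_iid_sum: "finite (set_pmf D) \<Longrightarrow> finite (set_pmf (iid_sum k D))"
  by (induction k) auto

lemma finite_set_pmf_cycle_step [simp]: "finite (set_pmf (cycle_step p \<xi> x))"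
  unfolding cycle_step_def
  using finite_set_pmf_iid_sum_pair[of "target_offspring p \<xi>"]
    finite_set_pmf_iid_sum[of "stutter_offspring p"]
  by (auto simp: split_def)

lemma finite_set_pmf_amplicon [simp]: "finite (set_pmf (amplicon p \<xi> n))"
  by (induction n) auto

lemma expectation_iid_sum_pair_additive:
  fixes u :: "nat \<times> nat \<Rightarrow> real"
  assumes D: "finite (set_pmf D)"
    and u: "\<And>a b c d. u (a + c, b + d) = u (a, b) + u (c, d)"
  shows "measure_pmf.expectation (iid_sum_pair k D) u = k * measure_pmf.expectation D u"
proof (induction k)
  case 0
  have "u (0, 0) = 0" using u[of 0 0 0 0] by simp
  then show ?case by simp
next
  case (Suc k)
  have [simp]: "integrable (measure_pmf D) f" "integrable (measure_pmf (iid_sum_pair k D)) f"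
    for f :: "_ \<Rightarrow> real"
    by (simp_all add: integrable_measure_pmf_finite D finite_set_pmf_iid_sum_pair)
  show ?case using Suc.IH
    by (simp add: expectation_bind_pmf_finite D finite_set_pmf_iid_sum_pair split_def u
        algebra_simps)
qed

lemma expectation_iid_sum_pair_product:
  fixes u v :: "nat \<times> nat \<Rightarrow> real"
  assumes D: "finite (set_pmf D)"
    and u: "\<And>a b c d. u (a + c, b + d) = u (a, b) + u (c, d)"
    and v: "\<And>a b c d. v (a + c, b + d) = v (a, b) + v (c, d)"
  shows "measure_pmf.expectation (iid_sum_pair k D) (\<lambda>x. u x * v x)
       = k * measure_pmf.expectation D (\<lambda>x. u x * v x)
         + real k * (real k - 1) * measure_pmf.expectation D u * measure_pmf.expectation D v"
proof (induction k)
  case 0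
  have "u (0, 0) = 0" using u[of 0 0 0 0] by simp
  then show ?case by simp
next
  case (Suc k)
  have [simp]: "integrable (measure_pmf D) f" "integrable (measure_pmf (iid_sum_pair k D)) f"
    for f :: "_ \<Rightarrow> real"
    by (simp_all add: integrable_measure_pmf_finite D finite_set_pmf_iid_sum_pair)
  show ?case using Suc.IH
    by (simp add: expectation_bind_pmf_finite D finite_set_pmf_iid_sum_pair split_def u v
        expectation_iid_sum_pair_additive[OF D u] expectation_iid_sum_pair_additive[OF D v]
        algebra_simps)
qed

lemma expectation_iid_sum:
  assumes D: "finite (set_pmf D)"
  shows "measure_pmf.expectation (iid_sum k D) real = k * measure_pmf.expectation D real"
proof (induction k)
  case (Suc k)
  have [simp]: "integrable (measure_pmf D) f" "integrable (measure_pmf (iid_sum k D)) f"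
    for f :: "_ \<Rightarrow> real"
    by (simp_all add: integrable_measure_pmf_finite D finite_set_pmf_iid_sum)
  show ?case using Suc.IH
    by (simp add: expectation_bind_pmf_finite D finite_set_pmf_iid_sum algebra_simps)
qed simp

lemma expectation_target_offspring:
  assumes "0 \<le> p" "p \<le> 1" "0 \<le> \<xi>" "\<xi> \<le> 1"
  shows "measure_pmf.expectation (target_offspring p \<xi>) (\<lambda>x. real (fst x)) = p * (1 - \<xi>)"
    and "measure_pmf.expectation (target_offspring p \<xi>) (\<lambda>x. real (snd x)) = p * \<xi>"
    and "measure_pmf.expectation (target_offspring p \<xi>) (\<lambda>x. real (fst x) * real (fst x))
         = p * (1 - \<xi>)"
    and "measure_pmf.expectation (target_offspring p \<xi>) (\<lambda>x. real (fst x) * real (snd x)) = 0"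
  using assms by (simp_all add: target_offspring_def expectation_bind_pmf_finite)

lemma expectation_stutter_offspring:
  assumes "0 \<le> p" "p \<le> 1"
  shows "measure_pmf.expectation (stutter_offspring p) real = p"
  using assms by (simp add: stutter_offspring_def)

lemma expectation_cycle_step:
  assumes "0 \<le> p" "p \<le> 1" "0 \<le> \<xi>" "\<xi> \<le> 1"
  defines "q \<equiv> p * (1 - \<xi>)"
  shows "measure_pmf.expectation (cycle_step p \<xi> (t, s)) (\<lambda>y. real (fst y)) = (1 + q) * t"
    and "measure_pmf.expectation (cycle_step p \<xi> (t, s)) (\<lambda>y. real (snd y))
         = (1 + p) * s + p * \<xi> * t"
    and "measure_pmf.expectation (cycle_step p \<xi> (t, s)) (\<lambda>y. real (fst y) ^ 2)
         = (1 + q)\<^sup>2 * t\<^sup>2 + q * (1 - q) * t"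
    and "measure_pmf.expectation (cycle_step p \<xi> (t, s)) (\<lambda>y. real (fst y) * real (snd y))
         = (1 + p) * (1 + q) * t * s + p * \<xi> * (1 + q) * t\<^sup>2 - q * p * \<xi> * t"
proof -
  let ?E = "measure_pmf.expectation"
  let ?A = "iid_sum_pair t (target_offspring p \<xi>)"
  let ?B = "iid_sum s (stutter_offspring p)"
  have [simp]: "integrable (measure_pmf ?A) f" "integrable (measure_pmf ?B) g"
    for f :: "_ \<Rightarrow> real" and g :: "_ \<Rightarrow> real"
    by (simp_all add: integrable_measure_pmf_finite finite_set_pmf_iid_sum_pair
        finite_set_pmf_iid_sum)
  have cycle_expectation: "?E (cycle_step p \<xi> (t, s)) f = ?E ?A (\<lambda>a. ?E ?B (\<lambda>c. f (t + fst a, s + snd a + c)))"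
    for f :: "_ \<Rightarrow> real"
    unfolding cycle_step_def
    by (simp add: split_def expectation_bind_pmf_finite finite_set_pmf_iid_sum_pair
        finite_set_pmf_iid_sum)
  note offspring = expectation_target_offspring[OF assms(1-4), folded q_def]
  have fst_add: "\<And>a b c d. real (fst (a + c, b + d)) = real (fst (a, b)) + real (fst (c, d))"
    and snd_add: "\<And>a b c d. real (snd (a + c, b + d)) = real (snd (a, b)) + real (snd (c, d))"
    by simp_all
  have A_T: "?E ?A (\<lambda>a. real (fst a)) = t * q"
    and A_S: "?E ?A (\<lambda>a. real (snd a)) = t * (p * \<xi>)"
    using expectation_iid_sum_pair_additive[OF _ fst_add] expectation_iid_sum_pair_additive[OF _ snd_add]
    by (simp_all add: offspring)
  have A_TT: "?E ?A (\<lambda>a. real (fst a) * real (fst a)) = real t * q + real t * (real t - 1) * q\<^sup>2"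
    and A_TS: "?E ?A (\<lambda>a. real (fst a) * real (snd a)) = real t * (real t - 1) * q * (p * \<xi>)"
    using expectation_iid_sum_pair_product[OF _ fst_add fst_add]
      expectation_iid_sum_pair_product[OF _ fst_add snd_add]
    by (simp_all add: offspring power2_eq_square)
  have B_S: "?E ?B real = s * p"
    by (simp add: expectation_iid_sum expectation_stutter_offspring assms(1,2))
  note moments = A_T A_S A_TT A_TS B_S
  show "?E (cycle_step p \<xi> (t, s)) (\<lambda>y. real (fst y)) = (1 + q) * t"
    unfolding cycle_expectation by (simp add: moments algebra_simps)
  show "?E (cycle_step p \<xi> (t, s)) (\<lambda>y. real (snd y)) = (1 + p) * s + p * \<xi> * t"
    unfolding cycle_expectation by (simp add: moments algebra_simps)
  show "?E (cycle_step p \<xi> (t, s)) (\<lambda>y. real (fst y) ^ 2) = (1 + q)\<^sup>2 * t\<^sup>2 + q * (1 - q) * t"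
    unfolding cycle_expectation by (simp add: moments algebra_simps power2_eq_square)
  show "?E (cycle_step p \<xi> (t, s)) (\<lambda>y. real (fst y) * real (snd y))
        = (1 + p) * (1 + q) * t * s + p * \<xi> * (1 + q) * t\<^sup>2 - q * p * \<xi> * t"
    unfolding cycle_expectation by (simp add: moments algebra_simps power2_eq_square)
qed

lemma expectation_amplicon_Suc:
  fixes f :: "nat \<times> nat \<Rightarrow> real"
  shows "measure_pmf.expectation (amplicon p \<xi> (Suc n)) f
   = measure_pmf.expectation (amplicon p \<xi> n) (\<lambda>x. measure_pmf.expectation (cycle_step p \<xi> x) f)"
  by (simp, rule expectation_bind_pmf_finite) auto

lemma amplicon_moments_Suc:
  fixes p \<xi> :: real and n :: nat
  assumes "0 \<le> p" "p \<le> 1" "0 \<le> \<xi>" "\<xi> \<le> 1"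
  defines "q \<equiv> p * (1 - \<xi>)"
  defines "E \<equiv> measure_pmf.expectation (amplicon p \<xi> n)"
    and "E' \<equiv> measure_pmf.expectation (amplicon p \<xi> (Suc n))"
  shows "E' (\<lambda>x. real (fst x)) = (1 + q) * E (\<lambda>x. real (fst x))"
    and "E' (\<lambda>x. real (snd x)) = (1 + p) * E (\<lambda>x. real (snd x)) + p * \<xi> * E (\<lambda>x. real (fst x))"
    and "E' (\<lambda>x. real (fst x) ^ 2)
         = (1 + q)\<^sup>2 * E (\<lambda>x. real (fst x) ^ 2) + q * (1 - q) * E (\<lambda>x. real (fst x))"
    and "E' (\<lambda>x. real (fst x) * real (snd x))
         = (1 + p) * (1 + q) * E (\<lambda>x. real (fst x) * real (snd x))
           + p * \<xi> * (1 + q) * E (\<lambda>x. real (fst x) ^ 2) - q * p * \<xi> * E (\<lambda>x. real (fst x))"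
  unfolding E_def E'_def expectation_amplicon_Suc
    expectation_cycle_step[OF assms(1-4), of "fst x" "snd x" for x, folded q_def, unfolded prod.collapse]
  by (simp_all add: integrable_measure_pmf_finite mult.assoc)

lemma amplicon_moments:
  assumes "0 \<le> p" "p \<le> 1" "0 \<le> \<xi>" "\<xi> \<le> 1"
  defines "q \<equiv> p * (1 - \<xi>)"
  shows "measure_pmf.expectation (amplicon p \<xi> n) (\<lambda>x. real (fst x)) = (1 + q) ^ n"
    and "measure_pmf.expectation (amplicon p \<xi> n) (\<lambda>x. real (snd x)) = (1 + p) ^ n - (1 + q) ^ n"
    and "measure_pmf.expectation (amplicon p \<xi> n) (\<lambda>x. real (fst x) ^ 2)
         = ((1 + q) ^ n)\<^sup>2 + (1 - q) / (1 + q) * (1 + q) ^ n * ((1 + q) ^ n - 1)"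
    and "measure_pmf.expectation (amplicon p \<xi> n) (\<lambda>x. real (fst x) * real (snd x))
         = (1 + q) ^ n / (1 + q) * (\<xi> * (1 - (1 + p) ^ n) + 2 * ((1 + p) ^ n - (1 + q) ^ n))"
proof (induction n)
  case (Suc n)
  have "0 \<le> q" using assms by (simp add: q_def)
  then have q: "1 + q \<noteq> 0" by linarith
  define u where "u = (1 + q) ^ n"
  define v where "v = (1 + p) ^ n"
  have pow: "(1 + q) ^ Suc n = (1 + q) * u" "(1 + p) ^ Suc n = (1 + p) * v"
    by (simp_all add: u_def v_def)
  note IH = Suc.IH[folded u_def v_def]
  note rec = amplicon_moments_Suc[OF assms(1-4), folded q_def]
  show "measure_pmf.expectation (amplicon p \<xi> (Suc n)) (\<lambda>x. real (fst x)) = (1 + q) ^ Suc n"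
    unfolding rec pow IH by simp
  show "measure_pmf.expectation (amplicon p \<xi> (Suc n)) (\<lambda>x. real (snd x))
      = (1 + p) ^ Suc n - (1 + q) ^ Suc n"
    unfolding rec pow IH by (simp add: q_def algebra_simps)
  show "measure_pmf.expectation (amplicon p \<xi> (Suc n)) (\<lambda>x. real (fst x) ^ 2)
      = ((1 + q) ^ Suc n)\<^sup>2 + (1 - q) / (1 + q) * (1 + q) ^ Suc n * ((1 + q) ^ Suc n - 1)"
    unfolding rec pow IH using q
    by (simp add: divide_simps power2_eq_square) (simp add: algebra_simps)
  show "measure_pmf.expectation (amplicon p \<xi> (Suc n)) (\<lambda>x. real (fst x) * real (snd x))
      = (1 + q) ^ Suc n / (1 + q) * (\<xi> * (1 - (1 + p) ^ Suc n) + 2 * ((1 + p) ^ Suc n - (1 + q) ^ Suc n))"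
    unfolding rec pow IH using q unfolding q_def
    by (simp add: divide_simps power2_eq_square) (simp add: algebra_simps)
qed simp_all

theorem mainTheorem1:
  fixes p \<xi> :: real and n :: nat
  assumes "0 \<le> p" "p \<le> 1" "0 \<le> \<xi>" "\<xi> \<le> 1"
  defines "q \<equiv> p * (1 - \<xi>)"
  defines "M \<equiv> amplicon p \<xi> n"
  defines "ET \<equiv> measure_pmf.expectation M (\<lambda>x. real (fst x))"
  defines "ES \<equiv> measure_pmf.expectation M (\<lambda>x. real (snd x))"
  shows "ET = (1 + q) ^ n
         \<and> ES = (1 + p) ^ n - (1 + q) ^ n
         \<and> measure_pmf.variance M (\<lambda>x. real (fst x))
           = (1 - q) / (1 + q) * (1 + q) ^ n * ((1 + q) ^ n - 1)
         \<and> measure_pmf.expectation M (\<lambda>x. real (fst x) * real (snd x))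
           = (1 + q) powi (int n - 1) *
             (\<xi> * (1 - (1 + p) ^ n) + 2 * ((1 + p) ^ n - (1 + q) ^ n))
         \<and> measure_pmf.expectation M (\<lambda>x. (real (fst x) - ET) * (real (snd x) - ES))
           = (1 + q) powi (int n - 1) *
             ((1 - q) * ((1 + p) ^ n - (1 + q) ^ n) - \<xi> * ((1 + p) ^ n - 1))"
proof -
  have "0 \<le> q" using assms by (simp add: q_def)
  then have q: "1 + q \<noteq> 0" by linarith
  have M: "finite (set_pmf M)" by (simp add: M_def)
  note moments = amplicon_moments[OF assms(1-4), of n, folded q_def M_def]
  have ET: "ET = (1 + q) ^ n" and ES: "ES = (1 + p) ^ n - (1 + q) ^ n"
    using moments(1,2) by (simp_all add: ET_def ES_def)
  have variance: "measure_pmf.variance M (\<lambda>x. real (fst x))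
      = measure_pmf.expectation M (\<lambda>x. real (fst x) ^ 2) - ET\<^sup>2"
    unfolding ET_def by (rule measure_pmf.variance_eq) (simp_all add: M integrable_measure_pmf_finite)
  have covariance: "measure_pmf.expectation M (\<lambda>x. (real (fst x) - ET) * (real (snd x) - ES))
      = measure_pmf.expectation M (\<lambda>x. real (fst x) * real (snd x)) - ET * ES"
    unfolding ET_def ES_def by (rule covariance_pmf_finite[OF M])
  have powi: "(1 + q) powi (int n - 1) = (1 + q) ^ n / (1 + q)"
    using q by (simp add: power_int_diff)
  show ?thesis
    unfolding variance covariance unfolding powi moments ET ES using q
    by (simp add: divide_simps power2_eq_square) (simp add: algebra_simps)
qed

end
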